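(* Let $p\geq 1$, let $\Omega$ be a locally compact Hausdorff space, let $\mu$ be a nonnegative Radon measure on $\Omega$, and let $A\subseteq\Omega$ be a Borel set such that $$|f|\chi_A\leq \|f\|_p\quad \mu\text{-a.e.}\qquad\text{for every } f\in L^p(\Omega,\mu).$$ Then for every measurable function $g$ on $\Omega$ with $g\chi_A\in L^p(\Omega,\mu)$, the set $$\Gamma_g:=\big\{f\in L^p(\Omega,\mu):\ |f|\geq |g|\chi_A\ \ \mu\text{-a.e.}\big\}$$ is not $\sigma$-porous in $L^p(\Omega,\mu)$.
   Context: Porosity: Let $X$ be a metric space and $0<\lambda<1$. A set $E\subseteq X$ is $\lambda$-porous at $x\in E$ if for each $\delta>0$ there is $y\in B(x;\delta)\setminus\{x\}$ with $B(y;\lambda\, d(x,y))\cap E=\varnothing$; $E$ is $\lambda$-porous if it is $\lambda$-porous at each of its points; $E$ is $\sigma$-$\lambda$-porous if it is a countable union of $\lambda$-porous subsets of $X$. A set is called $\sigma$-porous if it is $\sigma$-$\lambda$-porous for some $\lambda\in(0,1)$; "not $\sigma$-porous" means not $\sigma$-$\lambda$-porous for any $\lambda\in(0,1)$. $B(x;r)$ denotes the open ball of radius $r$ centered at $x$. *)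

theory Defs
  imports "HOL-Analysis.Analysis"
begin

definition porous_at :: "'b set \<Rightarrow> ('b \<Rightarrow> 'b \<Rightarrow> real) \<Rightarrow> real \<Rightarrow> 'b set \<Rightarrow> 'b \<Rightarrow> bool" where
  "porous_at X d lam E x \<longleftrightarrow>
     (\<forall>\<delta>>0. \<exists>y\<in>X. d x y < \<delta> \<and> y \<noteq> x \<and>
        {z\<in>X. d y z < lam * d x y} \<inter> E = {})"

definition porous :: "'b set \<Rightarrow> ('b \<Rightarrow> 'b \<Rightarrow> real) \<Rightarrow> real \<Rightarrow> 'b set \<Rightarrow> bool" where
  "porous X d lam E \<longleftrightarrow> E \<subseteq> X \<and> (\<forall>x\<in>E. porous_at X d lam E x)"

definition sigma_porous :: "'b set \<Rightarrow> ('b \<Rightarrow> 'b \<Rightarrow> real) \<Rightarrow> real \<Rightarrow> 'b set \<Rightarrow> bool" where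
  "sigma_porous X d lam E \<longleftrightarrow>
     (\<exists>F :: nat \<Rightarrow> 'b set. (\<forall>n. porous X d lam (F n)) \<and> E = (\<Union>n. F n))"

definition radon_measure :: "'a::topological_space measure \<Rightarrow> bool" where
  "radon_measure M \<longleftrightarrow>
     sets M = sets borel \<and>
     (\<forall>K. compact K \<longrightarrow> emeasure M K < \<infinity>) \<and>
     (\<forall>B\<in>sets borel. emeasure M B = (INF U\<in>{U. open U \<and> B \<subseteq> U}. emeasure M U)) \<and>
     (\<forall>U. open U \<longrightarrow> emeasure M U = (SUP K\<in>{K. compact K \<and> K \<subseteq> U}. emeasure M K))"

definition Lp_fun :: "'a measure \<Rightarrow> real \<Rightarrow> ('a \<Rightarrow> real) set" where
  "Lp_fun M p = {f. f \<in> borel_measurable M \<and> integrable M (\<lambda>x. \<bar>f x\<bar> powr p)}"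

definition Lp_norm :: "'a measure \<Rightarrow> real \<Rightarrow> ('a \<Rightarrow> real) \<Rightarrow> real" where
  "Lp_norm M p f = (\<integral>x. \<bar>f x\<bar> powr p \<partial>M) powr (1 / p)"

definition Lp_class :: "'a measure \<Rightarrow> real \<Rightarrow> ('a \<Rightarrow> real) \<Rightarrow> ('a \<Rightarrow> real) set" where
  "Lp_class M p f = {h \<in> Lp_fun M p. AE x in M. h x = f x}"

definition Lp_space :: "'a measure \<Rightarrow> real \<Rightarrow> ('a \<Rightarrow> real) set set" where
  "Lp_space M p = Lp_class M p ` Lp_fun M p"

definition Lp_dist :: "'a measure \<Rightarrow> real \<Rightarrow> ('a \<Rightarrow> real) set \<Rightarrow> ('a \<Rightarrow> real) set \<Rightarrow> real" where
  "Lp_dist M p C D = Lp_norm M p (\<lambda>x. (SOME f. f \<in> C) x - (SOME g. g \<in> D) x)"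

end

theory Submission
  imports Defs
begin

text \<open>Write \<open>\<phi> = |g| \<chi>\<^sub>A\<close>; every \<open>f\<close> with \<open>|f| \<ge> \<phi>\<close> a.e. lies in \<open>\<Gamma>\<^sub>g\<close>. Given \<open>\<lambda>\<close>-porous sets
  \<open>F\<^sub>0, F\<^sub>1, \<dots>\<close>, a Cantor-type construction produces nested sets
  \<open>{w. |w| \<ge> \<phi>\<^sub>n a.e., \<parallel>w - c\<^sub>n\<parallel>\<^sub>p \<le> r\<^sub>n}\<close> with increasing minorants \<open>\<phi>\<^sub>n \<ge> \<phi>\<close> supported in \<open>A\<close>,
  radii \<open>r\<^sub>n\<^sub>+\<^sub>1 \<le> r\<^sub>n/4\<close>, and the \<open>(n+1)\<close>-st set missing \<open>F\<^sub>n\<close>.  To step past \<open>F\<^sub>n\<close>, first raise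
  the minorant by a small margin; if the set still meets \<open>F\<^sub>n\<close> at some \<open>w\<close>, porosity gives a hole
  around a point \<open>y\<close> close to \<open>w\<close>.  On \<open>A\<close> the hypothesis \<open>|f| \<chi>\<^sub>A \<le> \<parallel>f\<parallel>\<^sub>p\<close> makes \<open>|w - y|\<close>
  pointwise small, so thanks to the margin, pushing \<open>|y|\<close> up to the minorant moves \<open>y\<close> by only a
  fraction of \<open>\<parallel>w - y\<parallel>\<^sub>p\<close> and stays in the hole, where a small ball avoids \<open>F\<^sub>n\<close>.  The centres
  form a fast Cauchy sequence, which converges a.e. and in \<open>L\<^sup>p\<close> (Fatou); its limit lies in
  \<open>\<Gamma>\<^sub>g\<close> but in no \<open>F\<^sub>n\<close>.\<close>

section \<open>Elementary inequalities and limits\<close>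

lemma powr_convex_combination_le:
  fixes a b s p :: real
  assumes p: "1 \<le> p" and a: "0 \<le> a" and b: "0 \<le> b" and s: "0 \<le> s" "s \<le> 1"
  shows "(s * a + (1 - s) * b) powr p \<le> s * a powr p + (1 - s) * b powr p"
proof (cases "a = 0 \<or> b = 0")
  case True
  have scale: "(u * v) powr p \<le> u * v powr p" if "0 \<le> u" "u \<le> 1" "0 \<le> v" for u v :: real
  proof -
    have "u powr p \<le> u"
      using that p powr_mono'[of 1 p u] by (cases "u = 0") auto
    then show ?thesis
      using that by (simp add: powr_mult mult_right_mono)
  qed
  from True show ?thesis
    using scale[of "1 - s" b] scale[of s a] s a b by auto
next
  case False
  then have "a > 0" "b > 0" using a b by auto
  then show ?thesis using convex_onD[OF powr_convex[OF p], of "1 - s" a b] s by auto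
qed

lemma le_add_powr_div_powr:
  fixes a e p :: real
  assumes "0 \<le> a" "0 < e" "1 \<le> p"
  shows "a \<le> e + a powr p / e powr (p - 1)"
proof (cases "a \<le> e")
  case True
  then show ?thesis using assms by (simp add: add_increasing2)
next
  case False
  have "a * e powr (p - 1) \<le> a * a powr (p - 1)"
    using assms False by (intro mult_left_mono powr_mono2) auto
  also have "\<dots> = a powr p" using False assms by (simp add: powr_mult_base)
  finally have "a \<le> a powr p / e powr (p - 1)" using assms by (simp add: field_simps)
  then show ?thesis using assms by simp
qed

lemma powr_div_powr_le:
  fixes a q p :: real
  assumes "0 \<le> a" "a \<le> q ^ 2" "0 < q" "q \<le> 1" "1 \<le> p"
  shows "a powr p / q powr (p - 1) \<le> q"
proof -
  have "a powr p \<le> (q ^ 2) powr p" using assms by (intro powr_mono2) auto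
  also have "\<dots> = q powr (2 * p)"
    using assms by (simp add: powr_powr[symmetric] powr_realpow)
  also have "\<dots> = q powr ((p - 1) + (p + 1))" by simp
  also have "\<dots> = q powr (p - 1) * q powr (p + 1)" by (rule powr_add)
  finally have "a powr p / q powr (p - 1) \<le> q powr (p + 1)"
    using assms by (simp add: divide_le_eq mult.commute)
  also have "\<dots> \<le> q powr 1" using assms by (intro powr_mono') auto
  finally show ?thesis using assms by simp
qed

lemma abs_add_powr_le_convex:
  fixes a b u v p :: real
  assumes p: "1 \<le> p" and a: "0 < a" and b: "0 < b"
  shows "\<bar>u + v\<bar> powr p \<le> (a + b) powr p *
           (a / (a + b) / a powr p * \<bar>u\<bar> powr p + b / (a + b) / b powr p * \<bar>v\<bar> powr p)"
proof -
  define s where "s = a / (a + b)"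
  have s: "0 \<le> s" "s \<le> 1" "1 - s = b / (a + b)" using a b by (auto simp: s_def field_simps)
  have "s * (\<bar>u\<bar> / a) = \<bar>u\<bar> / (a + b)" using a by (simp add: s_def)
  moreover have "(1 - s) * (\<bar>v\<bar> / b) = \<bar>v\<bar> / (a + b)" using b by (simp add: s(3))
  ultimately have "\<bar>u\<bar> + \<bar>v\<bar> = (a + b) * (s * (\<bar>u\<bar> / a) + (1 - s) * (\<bar>v\<bar> / b))"
    using a b by (simp add: add_divide_distrib[symmetric])
  moreover have "\<bar>u + v\<bar> powr p \<le> (\<bar>u\<bar> + \<bar>v\<bar>) powr p"
    using p by (intro powr_mono2) auto
  ultimately have "\<bar>u + v\<bar> powr p \<le> (a + b) powr p * (s * (\<bar>u\<bar> / a) + (1 - s) * (\<bar>v\<bar> / b)) powr p"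
    using a b s by (simp add: powr_mult)
  also have "\<dots> \<le> (a + b) powr p * (s * (\<bar>u\<bar> / a) powr p + (1 - s) * (\<bar>v\<bar> / b) powr p)"
    using a b s by (intro mult_left_mono powr_convex_combination_le p) auto
  also have "\<dots> = (a + b) powr p *
           (a / (a + b) / a powr p * \<bar>u\<bar> powr p + b / (a + b) / b powr p * \<bar>v\<bar> powr p)"
    using a b by (simp add: s(3) powr_divide) (simp add: s_def)
  finally show ?thesis .
qed

lemma convergent_if_summable_diff:
  fixes f :: "nat \<Rightarrow> 'a::real_normed_vector"
  assumes "summable (\<lambda>n. f (Suc n) - f n)"
  shows "convergent f"
proof -
  have "(\<lambda>n. f n - f 0) \<longlonglongrightarrow> (\<Sum>n. f (Suc n) - f n)"
    using summable_LIMSEQ[OF assms] by (simp add: sum_lessThan_telescope)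
  then have "(\<lambda>n. f n - f 0 + f 0) \<longlonglongrightarrow> (\<Sum>n. f (Suc n) - f n) + f 0"
    by (intro tendsto_add tendsto_const)
  then show ?thesis by (auto simp: convergent_def)
qed

lemma AE_le_abs_if_LIMSEQ:
  fixes \<phi> c :: "nat \<Rightarrow> 'a \<Rightarrow> real"
  assumes mono: "\<And>n x. \<phi> n x \<le> \<phi> (Suc n) x"
    and bound: "\<And>n. AE x in M. \<phi> n x \<le> \<bar>c n x\<bar>"
    and lim: "AE x in M. (\<lambda>n. c n x) \<longlonglongrightarrow> z x"
  shows "AE x in M. \<phi> n x \<le> \<bar>z x\<bar>"
proof -
  have "AE x in M. \<forall>m. \<phi> m x \<le> \<bar>c m x\<bar>" using bound by (simp add: AE_all_countable)
  then show ?thesis using lim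
  proof eventually_elim
    case (elim x)
    have "\<phi> n x \<le> \<bar>c m x\<bar>" if "n \<le> m" for m
      using lift_Suc_mono_le[of "\<lambda>k. \<phi> k x", OF mono that] elim(1)[rule_format, of m] by linarith
    with elim(2) show ?case by (intro LIMSEQ_le_const[OF tendsto_rabs]) auto
  qed
qed

section \<open>The spaces \<open>L\<^sup>p\<close>, \<open>p \<ge> 1\<close>\<close>

locale Lp_exponent =
  fixes M :: "'a measure" and p :: real
  assumes one_le_p: "1 \<le> p"
begin

lemma Lp_fun_measurable: "f \<in> Lp_fun M p \<Longrightarrow> f \<in> borel_measurable M"
  by (simp add: Lp_fun_def)

lemma Lp_fun_integrable: "f \<in> Lp_fun M p \<Longrightarrow> integrable M (\<lambda>x. \<bar>f x\<bar> powr p)"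
  by (simp add: Lp_fun_def)

lemma Lp_norm_nonneg: "0 \<le> Lp_norm M p f"
  by (simp add: Lp_norm_def)

lemma Lp_norm_powr: "Lp_norm M p f powr p = (\<integral>x. \<bar>f x\<bar> powr p \<partial>M)"
proof -
  have "0 \<le> (\<integral>x. \<bar>f x\<bar> powr p \<partial>M)" by (intro integral_nonneg_AE) auto
  then show ?thesis using one_le_p by (simp add: Lp_norm_def powr_powr)
qed

lemma Lp_norm_leI:
  assumes "0 \<le> r" "(\<integral>x. \<bar>f x\<bar> powr p \<partial>M) \<le> r powr p"
  shows "Lp_norm M p f \<le> r"
proof -
  have "0 \<le> (\<integral>x. \<bar>f x\<bar> powr p \<partial>M)" by (intro integral_nonneg_AE) auto
  then have "Lp_norm M p f \<le> (r powr p) powr (1 / p)"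
    unfolding Lp_norm_def using assms one_le_p by (intro powr_mono2) auto
  also have "\<dots> = r" using assms one_le_p by (simp add: powr_powr)
  finally show ?thesis .
qed

lemma Lp_fun_dominated:
  assumes "f \<in> Lp_fun M p" "h \<in> borel_measurable M" "AE x in M. \<bar>h x\<bar> \<le> \<bar>f x\<bar>"
  shows "h \<in> Lp_fun M p"
proof -
  have "AE x in M. \<bar>h x\<bar> powr p \<le> \<bar>f x\<bar> powr p"
    using assms(3) by eventually_elim (use one_le_p in \<open>auto intro: powr_mono2\<close>)
  with assms show ?thesis
    unfolding Lp_fun_def by (auto intro: Bochner_Integration.integrable_bound)
qed

lemma Lp_norm_dominated:
  assumes "f \<in> Lp_fun M p" "h \<in> borel_measurable M" "AE x in M. \<bar>h x\<bar> \<le> \<bar>f x\<bar>"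
  shows "Lp_norm M p h \<le> Lp_norm M p f"
proof -
  have "AE x in M. \<bar>h x\<bar> powr p \<le> \<bar>f x\<bar> powr p"
    using assms(3) by eventually_elim (use one_le_p in \<open>auto intro: powr_mono2\<close>)
  then have "(\<integral>x. \<bar>h x\<bar> powr p \<partial>M) \<le> (\<integral>x. \<bar>f x\<bar> powr p \<partial>M)"
    using assms Lp_fun_dominated by (intro integral_mono_AE) (auto simp: Lp_fun_def)
  then show ?thesis
    using one_le_p by (auto simp: Lp_norm_def intro!: powr_mono2 integral_nonneg_AE)
qed

lemma Lp_norm_cong_AE:
  assumes "AE x in M. f x = g x" "f \<in> borel_measurable M" "g \<in> borel_measurable M"
  shows "Lp_norm M p f = Lp_norm M p g"
proof -
  have "(\<integral>x. \<bar>f x\<bar> powr p \<partial>M) = (\<integral>x. \<bar>g x\<bar> powr p \<partial>M)"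
    by (rule integral_cong_AE) (use assms in auto)
  then show ?thesis by (simp add: Lp_norm_def)
qed

lemma Lp_fun_add:
  assumes f: "f \<in> Lp_fun M p" and g: "g \<in> Lp_fun M p"
  shows "(\<lambda>x. f x + g x) \<in> Lp_fun M p"
proof -
  have [measurable]: "f \<in> borel_measurable M" "g \<in> borel_measurable M"
    using f g by (auto simp: Lp_fun_def)
  have bound: "\<bar>a + b\<bar> powr p \<le> 2 powr p * (\<bar>a\<bar> powr p + \<bar>b\<bar> powr p)" for a b :: real
  proof -
    have "\<bar>a + b\<bar> powr p \<le> (2 * max \<bar>a\<bar> \<bar>b\<bar>) powr p"
      using one_le_p by (intro powr_mono2) auto
    also have "\<dots> = 2 powr p * max \<bar>a\<bar> \<bar>b\<bar> powr p" by (simp add: powr_mult)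
    also have "\<dots> \<le> 2 powr p * (\<bar>a\<bar> powr p + \<bar>b\<bar> powr p)"
      by (intro mult_left_mono) (auto simp: max_def)
    finally show ?thesis .
  qed
  have "integrable M (\<lambda>x. 2 powr p * (\<bar>f x\<bar> powr p + \<bar>g x\<bar> powr p))"
    using f g by (auto simp: Lp_fun_def)
  then have "integrable M (\<lambda>x. \<bar>f x + g x\<bar> powr p)"
    by (rule Bochner_Integration.integrable_bound) (auto intro!: AE_I2 simp: bound)
  then show ?thesis by (simp add: Lp_fun_def)
qed

lemma Lp_fun_cmult: "f \<in> Lp_fun M p \<Longrightarrow> (\<lambda>x. c * f x) \<in> Lp_fun M p"
  by (auto simp: Lp_fun_def abs_mult powr_mult)

lemma Lp_fun_diff: "f \<in> Lp_fun M p \<Longrightarrow> g \<in> Lp_fun M p \<Longrightarrow> (\<lambda>x. f x - g x) \<in> Lp_fun M p"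
  using Lp_fun_add[of f "\<lambda>x. - 1 * g x"] Lp_fun_cmult[of g "- 1"] by simp

lemma Lp_norm_cmult: "Lp_norm M p (\<lambda>x. c * f x) = \<bar>c\<bar> * Lp_norm M p f"
proof -
  have "0 \<le> (\<integral>x. \<bar>f x\<bar> powr p \<partial>M)" by (intro integral_nonneg_AE) auto
  moreover have "(\<bar>c\<bar> powr p) powr (1/p) = \<bar>c\<bar>" using one_le_p by (simp add: powr_powr)
  ultimately show ?thesis by (simp add: Lp_norm_def abs_mult powr_mult)
qed

lemma Lp_norm_diff_commute: "Lp_norm M p (\<lambda>x. f x - g x) = Lp_norm M p (\<lambda>x. g x - f x)"
  by (simp add: Lp_norm_def abs_minus_commute)

lemma AE_eq_0_if_Lp_norm_eq_0:
  assumes "f \<in> Lp_fun M p" "Lp_norm M p f = 0"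
  shows "AE x in M. f x = 0"
proof -
  have "(\<integral>x. \<bar>f x\<bar> powr p \<partial>M) = 0" using Lp_norm_powr[of f] assms one_le_p by simp
  then have "AE x in M. \<bar>f x\<bar> powr p = 0"
    using integral_nonneg_eq_0_iff_AE[OF Lp_fun_integrable[OF assms(1)]] by auto
  then show ?thesis by eventually_elim simp
qed

lemma Lp_norm_triangle:
  assumes f: "f \<in> Lp_fun M p" and g: "g \<in> Lp_fun M p"
  shows "Lp_norm M p (\<lambda>x. f x + g x) \<le> Lp_norm M p f + Lp_norm M p g"
proof -
  have [measurable]: "f \<in> borel_measurable M" "g \<in> borel_measurable M"
    using f g by (auto simp: Lp_fun_def)
  define a where "a = Lp_norm M p f"
  define b where "b = Lp_norm M p g"
  consider "a = 0" | "b = 0" | "0 < a" "0 < b"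
    using Lp_norm_nonneg[of f] Lp_norm_nonneg[of g] unfolding a_def b_def by force
  then show ?thesis
  proof cases
    case 1
    then have "Lp_norm M p (\<lambda>x. f x + g x) = Lp_norm M p g"
      using AE_eq_0_if_Lp_norm_eq_0[OF f] by (intro Lp_norm_cong_AE) (auto simp: a_def)
    then show ?thesis using 1 by (simp add: a_def)
  next
    case 2
    then have "Lp_norm M p (\<lambda>x. f x + g x) = Lp_norm M p f"
      using AE_eq_0_if_Lp_norm_eq_0[OF g] by (intro Lp_norm_cong_AE) (auto simp: b_def)
    then show ?thesis using 2 by (simp add: b_def)
  next
    case 3
    have "(\<integral>x. \<bar>f x + g x\<bar> powr p \<partial>M) \<le> (\<integral>x. (a + b) powr p *
        (a / (a + b) / a powr p * \<bar>f x\<bar> powr p + b / (a + b) / b powr p * \<bar>g x\<bar> powr p) \<partial>M)"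
      using 3 f g Lp_fun_add[OF f g] one_le_p
      by (intro integral_mono abs_add_powr_le_convex) (auto simp: Lp_fun_def)
    also have "\<dots> = (a + b) powr p * (a / (a + b) / a powr p * (\<integral>x. \<bar>f x\<bar> powr p \<partial>M)
          + b / (a + b) / b powr p * (\<integral>x. \<bar>g x\<bar> powr p \<partial>M))"
      using f g by (simp add: Lp_fun_def)
    also have "\<dots> = (a + b) powr p"
      using 3 unfolding Lp_norm_powr[symmetric] a_def[symmetric] b_def[symmetric]
      by (simp add: add_divide_distrib[symmetric])
    finally show ?thesis using 3 by (intro Lp_norm_leI) (auto simp: a_def b_def)
  qed
qed

lemma Lp_norm_triangle_diff:
  assumes "f \<in> Lp_fun M p" "g \<in> Lp_fun M p" "h \<in> Lp_fun M p"
  shows "Lp_norm M p (\<lambda>x. f x - h x) \<le> Lp_norm M p (\<lambda>x. f x - g x) + Lp_norm M p (\<lambda>x. g x - h x)"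
  using Lp_norm_triangle[OF Lp_fun_diff[OF assms(1,2)] Lp_fun_diff[OF assms(2,3)]] by simp

lemma Lp_class_self: "f \<in> Lp_fun M p \<Longrightarrow> f \<in> Lp_class M p f"
  by (simp add: Lp_class_def)

lemma some_Lp_class:
  assumes "f \<in> Lp_fun M p"
  shows "(SOME h. h \<in> Lp_class M p f) \<in> Lp_fun M p"
    and "AE x in M. (SOME h. h \<in> Lp_class M p f) x = f x"
  using someI[of "\<lambda>h. h \<in> Lp_class M p f", OF Lp_class_self[OF assms]]
  by (auto simp: Lp_class_def)

lemma Lp_dist_Lp_class:
  assumes f: "f \<in> Lp_fun M p" and g: "g \<in> Lp_fun M p"
  shows "Lp_dist M p (Lp_class M p f) (Lp_class M p g) = Lp_norm M p (\<lambda>x. f x - g x)"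
  unfolding Lp_dist_def
proof (rule Lp_norm_cong_AE)
  show "AE x in M. (SOME h. h \<in> Lp_class M p f) x - (SOME h. h \<in> Lp_class M p g) x = f x - g x"
    using some_Lp_class(2)[OF f] some_Lp_class(2)[OF g] by eventually_elim simp
  show "(\<lambda>x. (SOME h. h \<in> Lp_class M p f) x - (SOME h. h \<in> Lp_class M p g) x) \<in> borel_measurable M"
    using some_Lp_class(1)[OF f] some_Lp_class(1)[OF g] by (auto simp: Lp_fun_def)
  show "(\<lambda>x. f x - g x) \<in> borel_measurable M"
    using f g by (auto simp: Lp_fun_def)
qed

lemma Lp_class_eqI:
  "AE x in M. f x = g x \<Longrightarrow> Lp_class M p f = Lp_class M p g"
  unfolding Lp_class_def by (auto elim: eventually_elim2)

lemma Lp_norm_min_small: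
  assumes f: "f \<in> Lp_fun M p" and f0: "\<And>x. 0 \<le> f x" and e: "0 < e"
  shows "\<exists>\<mu>>0. Lp_norm M p (\<lambda>x. min (f x) \<mu>) \<le> e"
proof -
  have [measurable]: "f \<in> borel_measurable M" using f by (rule Lp_fun_measurable)
  define s where "s = (\<lambda>(n::nat) x. \<bar>min (f x) (1 / (real n + 1))\<bar> powr p)"
  have "(\<lambda>n. integral\<^sup>L M (s n)) \<longlonglongrightarrow> integral\<^sup>L M (\<lambda>x. 0)"
  proof (rule integral_dominated_convergence[OF _ _ Lp_fun_integrable[OF f]])
    show "s n \<in> borel_measurable M" for n unfolding s_def by measurable
    show "AE x in M. (\<lambda>n. s n x) \<longlonglongrightarrow> 0"
    proof (rule AE_I2)
      fix x
      have inv: "(\<lambda>n. 1 / (real n + 1)) \<longlonglongrightarrow> 0"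
        using LIMSEQ_inverse_real_of_nat by (simp add: inverse_eq_divide add.commute)
      have "(\<lambda>n. min (f x) (1 / (real n + 1))) \<longlonglongrightarrow> 0"
        by (rule tendsto_sandwich[OF _ _ tendsto_const inv]) (simp_all add: f0)
      then have "(\<lambda>n. \<bar>min (f x) (1 / (real n + 1))\<bar> powr p) \<longlonglongrightarrow> \<bar>0\<bar> powr p"
        using one_le_p by (intro tendsto_powr' tendsto_rabs) auto
      then show "(\<lambda>n. s n x) \<longlonglongrightarrow> 0" by (simp add: s_def)
    qed
    show "AE x in M. norm (s n x) \<le> \<bar>f x\<bar> powr p" for n
    proof (rule AE_I2)
      fix x
      have "\<bar>min (f x) (1 / (real n + 1))\<bar> \<le> \<bar>f x\<bar>" using f0[of x] by auto
      then show "norm (s n x) \<le> \<bar>f x\<bar> powr p"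
        using one_le_p by (simp add: s_def powr_mono2)
    qed
  qed simp
  moreover have "0 < e powr p" using e by simp
  ultimately have "\<forall>\<^sub>F n in sequentially. integral\<^sup>L M (s n) < e powr p"
    by (simp add: order_tendstoD(2))
  then obtain n where "integral\<^sup>L M (s n) < e powr p" by (auto simp: eventually_sequentially)
  then have "Lp_norm M p (\<lambda>x. min (f x) (1 / (real n + 1))) \<le> e"
    using e by (intro Lp_norm_leI) (auto simp: s_def)
  then show ?thesis by (intro exI[of _ "1 / (real n + 1)"]) auto
qed

lemma AE_summable_if_Lp_norm_le_quarter_power:
  assumes hL: "\<And>n. h n \<in> Lp_fun M p" and hN: "\<And>n. Lp_norm M p (h n) \<le> (1/4)^n"
  shows "AE x in M. summable (\<lambda>n. h n x)"
proof -
  have [measurable]: "h n \<in> borel_measurable M" for n using hL by (rule Lp_fun_measurable)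
  define q :: "nat \<Rightarrow> real" where "q n = (1/2)^n" for n
  have q: "0 < q n" "q n \<le> 1" "q n ^ 2 = (1/4)^n" for n
    by (auto simp: q_def power_le_one power2_eq_square power_mult_distrib[symmetric])
  \<comment> \<open>\<open>|h n| \<le> q n + u n\<close> pointwise, and \<open>\<integral> u n \<le> q n\<close> is summable.\<close>
  define u where "u = (\<lambda>n x. \<bar>h n x\<bar> powr p / q n powr (p - 1))"
  have [measurable]: "u n \<in> borel_measurable M" for n unfolding u_def by measurable
  have u0: "0 \<le> u n x" for n x by (simp add: u_def)
  have ui: "integrable M (u n)" for n
    using hL[of n] by (simp add: u_def Lp_fun_def)
  have uint: "integral\<^sup>L M (u n) \<le> q n" for n
  proof -
    have "integral\<^sup>L M (u n) = Lp_norm M p (h n) powr p / q n powr (p - 1)"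
      by (simp add: u_def Lp_norm_powr)
    also have "\<dots> \<le> q n"
      using hN[of n] q[of n] one_le_p by (intro powr_div_powr_le) (auto simp: Lp_norm_nonneg)
    finally show ?thesis .
  qed
  have nn: "0 \<le> integral\<^sup>L M (u n)" for n by (intro integral_nonneg_AE AE_I2 u0)
  have "summable (\<lambda>n. integral\<^sup>L M (u n))"
    using nn uint by (intro summable_comparison_test'[OF summable_geometric[of "1/2"]])
      (auto simp: q_def)
  then have "(\<Sum>n. ennreal (integral\<^sup>L M (u n))) < \<infinity>"
    using ennreal_suminf_neq_top nn by (simp add: less_top)
  moreover have "(\<integral>\<^sup>+x. (\<Sum>n. ennreal (u n x)) \<partial>M) = (\<Sum>n. ennreal (integral\<^sup>L M (u n)))"
    using ui u0 by (simp add: nn_integral_suminf nn_integral_eq_integral)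
  ultimately have "AE x in M. (\<Sum>n. ennreal (u n x)) < \<infinity>"
    by (intro finite_nn_integral_imp_ae_finite) auto
  then show ?thesis
  proof eventually_elim
    case (elim x)
    then have "summable (\<lambda>n. u n x)" using u0 by (auto intro: summable_suminf_not_top)
    then have "summable (\<lambda>n. q n + u n x)"
      by (intro summable_add) (auto simp: q_def)
    moreover have "norm (norm (h n x)) \<le> q n + u n x" for n
      using le_add_powr_div_powr[of "\<bar>h n x\<bar>" "q n" p] q[of n] one_le_p by (simp add: u_def)
    ultimately have "summable (\<lambda>n. norm (h n x))"
      by (rule summable_comparison_test')
    then show ?case by (rule summable_norm_cancel)
  qed
qed

lemma Lp_norm_le_if_AE_LIMSEQ:
  assumes fL: "\<And>m. f m \<in> Lp_fun M p" and fN: "\<And>m. Lp_norm M p (f m) \<le> b"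
    and g: "g \<in> borel_measurable M" and lim: "AE x in M. (\<lambda>m. f m x) \<longlonglongrightarrow> g x"
  shows "g \<in> Lp_fun M p" and "Lp_norm M p g \<le> b"
proof -
  have [measurable]: "f m \<in> borel_measurable M" "g \<in> borel_measurable M" for m
    using fL g by (auto simp: Lp_fun_def)
  have b: "0 \<le> b" using fN[of 0] Lp_norm_nonneg[of "f 0"] by linarith
  have "AE x in M. ennreal (\<bar>g x\<bar> powr p) = liminf (\<lambda>m. ennreal (\<bar>f m x\<bar> powr p))"
    using lim
  proof eventually_elim
    case (elim x)
    then have "(\<lambda>m. \<bar>f m x\<bar> powr p) \<longlonglongrightarrow> \<bar>g x\<bar> powr p"
      using one_le_p by (intro tendsto_powr' tendsto_rabs) auto
    then have "(\<lambda>m. ennreal (\<bar>f m x\<bar> powr p)) \<longlonglongrightarrow> ennreal (\<bar>g x\<bar> powr p)"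
      by (rule tendsto_ennrealI)
    then show ?case by (intro lim_imp_Liminf[symmetric]) auto
  qed
  then have "(\<integral>\<^sup>+x. ennreal (\<bar>g x\<bar> powr p) \<partial>M)
      = (\<integral>\<^sup>+x. liminf (\<lambda>m. ennreal (\<bar>f m x\<bar> powr p)) \<partial>M)"
    by (rule nn_integral_cong_AE)
  also have "\<dots> \<le> liminf (\<lambda>m. \<integral>\<^sup>+x. ennreal (\<bar>f m x\<bar> powr p) \<partial>M)"
    by (rule nn_integral_liminf) measurable
  also have "\<dots> \<le> liminf (\<lambda>m. ennreal (b powr p))"
  proof (intro Liminf_mono always_eventually allI)
    fix m
    have "(\<integral>\<^sup>+x. ennreal (\<bar>f m x\<bar> powr p) \<partial>M) = ennreal (Lp_norm M p (f m) powr p)"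
      using Lp_fun_integrable[OF fL] by (simp add: nn_integral_eq_integral Lp_norm_powr)
    also have "Lp_norm M p (f m) powr p \<le> b powr p"
      using fN[of m] one_le_p by (intro powr_mono2) (auto simp: Lp_norm_nonneg)
    finally show "(\<integral>\<^sup>+x. ennreal (\<bar>f m x\<bar> powr p) \<partial>M) \<le> ennreal (b powr p)"
      by (simp add: ennreal_leI)
  qed
  finally have bound: "(\<integral>\<^sup>+x. ennreal (\<bar>g x\<bar> powr p) \<partial>M) \<le> ennreal (b powr p)"
    by (simp add: Liminf_const)
  then have "integrable M (\<lambda>x. \<bar>g x\<bar> powr p)"
    by (intro integrableI_bounded) (auto simp: le_less_trans)
  then show "g \<in> Lp_fun M p" by (simp add: Lp_fun_def)
  have "(\<integral>x. \<bar>g x\<bar> powr p \<partial>M) = enn2real (\<integral>\<^sup>+x. ennreal (\<bar>g x\<bar> powr p) \<partial>M)"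
    by (rule integral_eq_nn_integral) auto
  also have "\<dots> \<le> b powr p"
    using bound enn2real_mono[OF bound] by simp
  finally show "Lp_norm M p g \<le> b" using b by (rule Lp_norm_leI[rotated])
qed

lemma Lp_limit_if_fast_Cauchy:
  assumes cL: "\<And>n. c n \<in> Lp_fun M p"
    and r: "\<And>n. 0 \<le> r n"
    and step: "\<And>n. Lp_norm M p (\<lambda>x. c (Suc n) x - c n x) + r (Suc n) \<le> r n"
    and fast: "\<And>n. r (Suc n) \<le> r n / 4" and r0: "r 0 \<le> 1"
  shows "\<exists>z\<in>Lp_fun M p. (AE x in M. (\<lambda>n. c n x) \<longlonglongrightarrow> z x)
           \<and> (\<forall>n. Lp_norm M p (\<lambda>x. z x - c n x) \<le> r n)"
proof -
  have [measurable]: "c n \<in> borel_measurable M" for n using cL by (rule Lp_fun_measurable)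
  have r_le: "r n \<le> (1/4)^n" for n
  proof (induction n)
    case (Suc n)
    then show ?case using fast[of n] by simp
  qed (simp add: r0)
  have "AE x in M. summable (\<lambda>n. c (Suc n) x - c n x)"
  proof (rule AE_summable_if_Lp_norm_le_quarter_power)
    show "(\<lambda>x. c (Suc n) x - c n x) \<in> Lp_fun M p" for n by (rule Lp_fun_diff[OF cL cL])
    show "Lp_norm M p (\<lambda>x. c (Suc n) x - c n x) \<le> (1/4)^n" for n
      using step[of n] r[of "Suc n"] r_le[of n] by linarith
  qed
  define z where "z x = lim (\<lambda>n. c n x)" for x
  have [measurable]: "z \<in> borel_measurable M" unfolding z_def by measurable
  have lim: "AE x in M. (\<lambda>n. c n x) \<longlonglongrightarrow> z x"
    using \<open>AE x in M. _\<close>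
  proof eventually_elim
    case (elim x)
    then show ?case
      unfolding z_def convergent_LIMSEQ_iff[symmetric] by (rule convergent_if_summable_diff)
  qed
  have chain: "Lp_norm M p (\<lambda>x. c (m + n) x - c n x) \<le> r n - r (m + n)" for m n
  proof (induction m)
    case 0
    then show ?case by (simp add: Lp_norm_def)
  next
    case (Suc m)
    have "Lp_norm M p (\<lambda>x. c (Suc m + n) x - c n x)
        \<le> Lp_norm M p (\<lambda>x. c (Suc (m + n)) x - c (m + n) x) + Lp_norm M p (\<lambda>x. c (m + n) x - c n x)"
      using Lp_norm_triangle_diff[OF cL cL cL] by simp
    then show ?case using Suc step[of "m + n"] by simp
  qed
  have zc: "(\<lambda>x. z x - c n x) \<in> Lp_fun M p \<and> Lp_norm M p (\<lambda>x. z x - c n x) \<le> r n" for n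
  proof -
    have "Lp_norm M p (\<lambda>x. c (m + n) x - c n x) \<le> r n" for m
      using chain[of m n] r[of "m + n"] by linarith
    moreover have "AE x in M. (\<lambda>m. c (m + n) x - c n x) \<longlonglongrightarrow> z x - c n x"
      using lim by eventually_elim (rule tendsto_diff[OF LIMSEQ_ignore_initial_segment tendsto_const])
    moreover have "(\<lambda>x. c (m + n) x - c n x) \<in> Lp_fun M p" for m
      by (rule Lp_fun_diff[OF cL cL])
    ultimately show ?thesis
      using Lp_norm_le_if_AE_LIMSEQ[of "\<lambda>m x. c (m + n) x - c n x" "r n" "\<lambda>x. z x - c n x"]
      by simp
  qed
  have "z \<in> Lp_fun M p" using Lp_fun_add[OF cL zc[THEN conjunct1], of 0 0] by simp
  with lim zc show ?thesis by blast
qed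

definition cball_above :: "('a \<Rightarrow> real) \<Rightarrow> ('a \<Rightarrow> real) \<Rightarrow> real \<Rightarrow> ('a \<Rightarrow> real) set" where
  "cball_above \<phi> c r =
     {w \<in> Lp_fun M p. (AE x in M. \<phi> x \<le> \<bar>w x\<bar>) \<and> Lp_norm M p (\<lambda>x. w x - c x) \<le> r}"

end

section \<open>Porosity of sets above a minorant\<close>

definition push_out :: "real \<Rightarrow> real \<Rightarrow> real" where
  "push_out \<phi> y = (if \<bar>y\<bar> < \<phi> then (if 0 \<le> y then \<phi> else - \<phi>) else y)"

lemma abs_push_out_ge: "0 \<le> \<phi> \<Longrightarrow> \<phi> \<le> \<bar>push_out \<phi> y\<bar>"
  by (auto simp: push_out_def)

lemma push_out_dist_le:
  fixes \<theta> \<phi> \<mu> b y :: real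
  assumes \<theta>: "0 < \<theta>" "\<theta> < 1" and \<mu>: "0 < \<mu>"
    and b: "\<phi> + min ((1 - \<theta>) / \<theta> * \<phi>) \<mu> \<le> \<bar>b\<bar>"
    and near: "0 < \<phi> \<Longrightarrow> \<bar>b - y\<bar> < \<mu>"
  shows "\<bar>push_out \<phi> y - y\<bar> \<le> \<theta> * \<bar>b - y\<bar>"
proof (cases "\<bar>y\<bar> < \<phi>")
  case False
  then show ?thesis using \<theta> by (simp add: push_out_def)
next
  case True
  then have gap: "\<bar>push_out \<phi> y - y\<bar> = \<phi> - \<bar>y\<bar>" by (auto simp: push_out_def)
  have tri: "\<bar>b\<bar> \<le> \<bar>y\<bar> + \<bar>b - y\<bar>" by linarith
  moreover have "\<bar>b - y\<bar> < \<mu>" using True near by linarith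
  ultimately have "\<not> \<phi> + \<mu> \<le> \<bar>b\<bar>" using True by linarith
  then have "\<phi> + (1 - \<theta>) / \<theta> * \<phi> \<le> \<bar>y\<bar> + \<bar>b - y\<bar>"
    using b tri by (auto simp: min_def split: if_splits)
  moreover have "(1 - \<theta>) / \<theta> * (\<phi> - \<bar>y\<bar>) \<le> (1 - \<theta>) / \<theta> * \<phi>"
    using \<theta> by (intro mult_left_mono) auto
  ultimately have "(\<phi> - \<bar>y\<bar>) / \<theta> \<le> \<bar>b - y\<bar>"
    using \<theta> by (simp add: field_simps)
  then show ?thesis using gap \<theta> by (simp add: field_simps)
qed

locale Lp_pointwise_bounded = Lp_exponent +
  fixes A :: "'a set"
  assumes abs_indicator_le_Lp_norm:
    "\<forall>f\<in>Lp_fun M p. AE x in M. \<bar>f x\<bar> * indicator A x \<le> Lp_norm M p f"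
begin

definition admissible_bound :: "('a \<Rightarrow> real) \<Rightarrow> bool" where
  "admissible_bound \<phi> \<longleftrightarrow> \<phi> \<in> Lp_fun M p \<and> (\<forall>x. 0 \<le> \<phi> x) \<and> (\<forall>x. 0 < \<phi> x \<longrightarrow> x \<in> A)"

lemma porous_hole_above:
  assumes por: "porous (Lp_space M p) (Lp_dist M p) lam F"
    and \<theta>: "0 < \<theta>" "\<theta> < 1" "\<theta> < lam"
    and \<phi>: "admissible_bound \<phi>" and \<mu>: "0 < \<mu>"
    and w: "w \<in> Lp_fun M p" "Lp_class M p w \<in> F"
    and w_above: "AE x in M. \<phi> x + min ((1 - \<theta>) / \<theta> * \<phi> x) \<mu> \<le> \<bar>w x\<bar>"
    and \<delta>: "0 < \<delta>" "\<delta> \<le> \<mu>"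
  shows "\<exists>z \<rho>. z \<in> Lp_fun M p \<and> (\<forall>x. \<phi> x \<le> \<bar>z x\<bar>) \<and> Lp_norm M p (\<lambda>x. z x - w x) < 2 * \<delta>
           \<and> 0 < \<rho> \<and> (\<forall>v\<in>Lp_fun M p. Lp_norm M p (\<lambda>x. v x - z x) \<le> \<rho> \<longrightarrow> Lp_class M p v \<notin> F)"
proof -
  have \<phi>0: "\<And>x. 0 \<le> \<phi> x" and \<phi>A: "\<And>x. 0 < \<phi> x \<Longrightarrow> x \<in> A" and [measurable]: "\<phi> \<in> borel_measurable M"
    using \<phi> by (auto simp: admissible_bound_def Lp_fun_def)
  have [measurable]: "w \<in> borel_measurable M" using w by (simp add: Lp_fun_def)
  obtain Y where Y: "Y \<in> Lp_space M p" "Lp_dist M p (Lp_class M p w) Y < \<delta>" "Y \<noteq> Lp_class M p w"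
    and hole: "{v \<in> Lp_space M p. Lp_dist M p Y v < lam * Lp_dist M p (Lp_class M p w) Y} \<inter> F = {}"
    using por w \<delta> unfolding porous_def porous_at_def by blast
  obtain y where yL: "y \<in> Lp_fun M p" and Yy: "Y = Lp_class M p y"
    using Y by (auto simp: Lp_space_def)
  have [measurable]: "y \<in> borel_measurable M" using yL by (simp add: Lp_fun_def)
  define t where "t = Lp_norm M p (\<lambda>x. w x - y x)"
  have dist_wY: "Lp_dist M p (Lp_class M p w) Y = t"
    unfolding Yy t_def by (rule Lp_dist_Lp_class[OF w(1) yL])
  with Y(2) have "t < \<delta>" by simp
  have t0: "0 < t"
  proof (rule ccontr)
    assume "\<not> 0 < t"
    then have "t = 0" using Lp_norm_nonneg[of "\<lambda>x. w x - y x"] by (simp add: t_def)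
    then have "AE x in M. w x - y x = 0"
      using AE_eq_0_if_Lp_norm_eq_0[OF Lp_fun_diff[OF w(1) yL]] by (simp add: t_def)
    then have "Lp_class M p w = Lp_class M p y" by (intro Lp_class_eqI) auto
    then show False using Y Yy by simp
  qed
  \<comment> \<open>The only use of the bound \<open>|f| \<chi>\<^sub>A \<le> \<parallel>f\<parallel>\<^sub>p\<close>.\<close>
  have near: "AE x in M. x \<in> A \<longrightarrow> \<bar>w x - y x\<bar> \<le> t"
    using abs_indicator_le_Lp_norm Lp_fun_diff[OF w(1) yL] unfolding t_def
    by (auto elim!: eventually_mono)
  define z where "z x = push_out (\<phi> x) (y x)" for x
  have [measurable]: "z \<in> borel_measurable M" unfolding z_def push_out_def by measurable
  have "AE x in M. \<bar>z x - y x\<bar> \<le> \<bar>\<theta> * (w x - y x)\<bar>"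
    using near w_above
  proof eventually_elim
    case (elim x)
    have "\<bar>z x - y x\<bar> \<le> \<theta> * \<bar>w x - y x\<bar>"
      unfolding z_def
    proof (rule push_out_dist_le[OF \<theta>(1,2) \<mu> elim(2)])
      show "\<bar>w x - y x\<bar> < \<mu>" if "0 < \<phi> x"
        using elim(1) \<phi>A[OF that] \<open>t < \<delta>\<close> \<delta> by linarith
    qed
    then show ?case using \<theta> by (simp add: abs_mult)
  qed
  moreover have "(\<lambda>x. \<theta> * (w x - y x)) \<in> Lp_fun M p"
    by (rule Lp_fun_cmult[OF Lp_fun_diff[OF w(1) yL]])
  ultimately have zyL: "(\<lambda>x. z x - y x) \<in> Lp_fun M p"
    and "Lp_norm M p (\<lambda>x. z x - y x) \<le> Lp_norm M p (\<lambda>x. \<theta> * (w x - y x))"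
    by (auto intro: Lp_fun_dominated Lp_norm_dominated)
  then have zy: "Lp_norm M p (\<lambda>x. z x - y x) \<le> \<theta> * t"
    using \<theta> by (simp add: Lp_norm_cmult t_def)
  have zL: "z \<in> Lp_fun M p" using Lp_fun_add[OF yL zyL] by simp
  define \<rho> where "\<rho> = (lam - \<theta>) * t / 2"
  have "Lp_norm M p (\<lambda>x. z x - w x) \<le> Lp_norm M p (\<lambda>x. z x - y x) + Lp_norm M p (\<lambda>x. y x - w x)"
    by (rule Lp_norm_triangle_diff[OF zL yL w(1)])
  also have "\<dots> \<le> \<theta> * t + t" using zy Lp_norm_diff_commute[of y w] by (simp add: t_def)
  also have "\<dots> < 2 * \<delta>"
    using mult_left_le_one_le[of t \<theta>] \<theta> t0 \<open>t < \<delta>\<close> by linarith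
  finally have "Lp_norm M p (\<lambda>x. z x - w x) < 2 * \<delta>" .
  moreover have "Lp_class M p v \<notin> F" if vL: "v \<in> Lp_fun M p" and v: "Lp_norm M p (\<lambda>x. v x - z x) \<le> \<rho>" for v
  proof -
    have "Lp_dist M p Y (Lp_class M p v) = Lp_norm M p (\<lambda>x. y x - v x)"
      unfolding Yy by (rule Lp_dist_Lp_class[OF yL vL])
    also have "\<dots> \<le> Lp_norm M p (\<lambda>x. y x - z x) + Lp_norm M p (\<lambda>x. z x - v x)"
      by (rule Lp_norm_triangle_diff[OF yL zL vL])
    also have "\<dots> \<le> \<theta> * t + \<rho>"
      using zy v Lp_norm_diff_commute[of y z] Lp_norm_diff_commute[of z v] by simp
    also have "\<dots> < lam * t"
      using mult_strict_right_mono[OF \<theta>(3) t0] by (simp add: \<rho>_def field_simps)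
    finally show ?thesis using hole vL dist_wY by (auto simp: Lp_space_def)
  qed
  moreover have "\<forall>x. \<phi> x \<le> \<bar>z x\<bar>" by (simp add: z_def abs_push_out_ge \<phi>0)
  moreover have "0 < \<rho>" using \<theta> t0 by (simp add: \<rho>_def)
  ultimately show ?thesis using zL by blast
qed

lemma porous_avoiding_cball_above:
  assumes por: "porous (Lp_space M p) (Lp_dist M p) lam F" and lam: "0 < lam" "lam < 1"
    and \<phi>: "admissible_bound \<phi>"
    and c: "c \<in> Lp_fun M p" "AE x in M. \<phi> x \<le> \<bar>c x\<bar>" and r: "0 < r"
  shows "\<exists>\<phi>' c' r'. admissible_bound \<phi>' \<and> (\<forall>x. \<phi> x \<le> \<phi>' x) \<and> c' \<in> Lp_fun M p
     \<and> (AE x in M. \<phi>' x \<le> \<bar>c' x\<bar>) \<and> 0 < r' \<and> r' \<le> r / 4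
     \<and> Lp_norm M p (\<lambda>x. c' x - c x) + r' \<le> r \<and> Lp_class M p ` cball_above \<phi>' c' r' \<inter> F = {}"
proof -
  have \<phi>L: "\<phi> \<in> Lp_fun M p" and \<phi>0: "\<And>x. 0 \<le> \<phi> x" and \<phi>A: "\<And>x. 0 < \<phi> x \<Longrightarrow> x \<in> A"
    using \<phi> by (auto simp: admissible_bound_def)
  have [measurable]: "\<phi> \<in> borel_measurable M" "c \<in> borel_measurable M"
    using \<phi>L c by (auto simp: Lp_fun_def)
  define \<theta> where "\<theta> = lam / 2"
  define k where "k = (1 - \<theta>) / \<theta>"
  have \<theta>: "0 < \<theta>" "\<theta> < 1" "\<theta> < lam" and k: "0 \<le> k" using lam by (auto simp: \<theta>_def k_def)
  have k\<phi>L: "(\<lambda>x. k * \<phi> x) \<in> Lp_fun M p" by (rule Lp_fun_cmult[OF \<phi>L])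
  obtain \<mu> where \<mu>: "0 < \<mu>" and small: "Lp_norm M p (\<lambda>x. min (k * \<phi> x) \<mu>) \<le> r / 8"
    using Lp_norm_min_small[OF k\<phi>L _, of "r / 8"] \<phi>0 k r by auto
  \<comment> \<open>Points above the raised minorant \<open>\<phi> + \<psi>\<close> have the margin \<open>porous_hole_above\<close> needs.\<close>
  define \<psi> where "\<psi> x = min (k * \<phi> x) \<mu>" for x
  have \<psi>0: "0 \<le> \<psi> x" for x using k \<phi>0[of x] \<mu> by (simp add: \<psi>_def)
  have [measurable]: "\<psi> \<in> borel_measurable M" unfolding \<psi>_def by measurable
  have \<psi>L: "\<psi> \<in> Lp_fun M p"
    using \<psi>0 k \<phi>0 by (intro Lp_fun_dominated[OF k\<phi>L]) (auto intro!: AE_I2 simp: \<psi>_def)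
  define \<phi>' where "\<phi>' x = \<phi> x + \<psi> x" for x
  define c' where "c' x = (if 0 \<le> c x then c x + \<psi> x else c x - \<psi> x)" for x
  have [measurable]: "c' \<in> borel_measurable M" unfolding c'_def by measurable
  have \<phi>': "admissible_bound \<phi>'"
    unfolding admissible_bound_def
  proof (intro conjI allI impI)
    show "\<phi>' \<in> Lp_fun M p" using Lp_fun_add[OF \<phi>L \<psi>L] by (simp add: \<phi>'_def[abs_def])
    show "0 \<le> \<phi>' x" for x using \<phi>0[of x] \<psi>0[of x] by (simp add: \<phi>'_def)
    show "x \<in> A" if "0 < \<phi>' x" for x
      using that \<phi>0[of x] \<phi>A[of x] \<mu> by (cases "\<phi> x = 0") (auto simp: \<phi>'_def \<psi>_def)
  qed
  have c'c: "AE x in M. \<bar>c' x - c x\<bar> \<le> \<bar>\<psi> x\<bar>" by (intro AE_I2) (simp add: c'_def \<psi>0)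
  then have c'L: "c' \<in> Lp_fun M p"
    using Lp_fun_add[OF c(1) Lp_fun_dominated[OF \<psi>L _ c'c]] by simp
  have c'_near: "Lp_norm M p (\<lambda>x. c' x - c x) \<le> r / 8"
    using Lp_norm_dominated[OF \<psi>L _ c'c] small by (simp add: \<psi>_def[abs_def])
  have c'_above: "AE x in M. \<phi>' x \<le> \<bar>c' x\<bar>"
    using c(2) by eventually_elim (use \<psi>0 in \<open>auto simp: \<phi>'_def c'_def\<close>)
  show ?thesis
  proof (cases "Lp_class M p ` cball_above \<phi>' c' (r / 8) \<inter> F = {}")
    case True
    show ?thesis
      by (rule exI[of _ \<phi>'], rule exI[of _ c'], rule exI[of _ "r / 8"])
        (use True \<phi>' c'L c'_above c'_near r \<psi>0 in \<open>auto simp: \<phi>'_def\<close>)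
  next
    case False
    then obtain w where w: "w \<in> Lp_fun M p" "Lp_class M p w \<in> F"
      and w_above: "AE x in M. \<phi>' x \<le> \<bar>w x\<bar>" and w_near: "Lp_norm M p (\<lambda>x. w x - c' x) \<le> r / 8"
      by (auto simp: cball_above_def)
    obtain z \<rho> where zL: "z \<in> Lp_fun M p" and z_above: "\<forall>x. \<phi> x \<le> \<bar>z x\<bar>"
      and z_near: "Lp_norm M p (\<lambda>x. z x - w x) < 2 * min \<mu> (r / 8)" and \<rho>: "0 < \<rho>"
      and hole: "\<forall>v\<in>Lp_fun M p. Lp_norm M p (\<lambda>x. v x - z x) \<le> \<rho> \<longrightarrow> Lp_class M p v \<notin> F"
      using porous_hole_above[OF por \<theta> \<phi> \<mu> w, of "min \<mu> (r / 8)"] w_above \<mu> r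
      by (auto simp: \<phi>'_def \<psi>_def k_def)
    have "Lp_norm M p (\<lambda>x. z x - c x) \<le> Lp_norm M p (\<lambda>x. z x - w x) + Lp_norm M p (\<lambda>x. w x - c x)"
      by (rule Lp_norm_triangle_diff[OF zL w(1) c(1)])
    also have "\<dots> \<le> Lp_norm M p (\<lambda>x. z x - w x) + (Lp_norm M p (\<lambda>x. w x - c' x) + Lp_norm M p (\<lambda>x. c' x - c x))"
      using Lp_norm_triangle_diff[OF w(1) c'L c(1)] by simp
    also have "\<dots> < r / 2" using z_near w_near c'_near by linarith
    finally have "Lp_norm M p (\<lambda>x. z x - c x) + min \<rho> (r / 4) \<le> r"
      using min.cobounded2[of \<rho> "r / 4"] r by linarith
    then show ?thesis
      using zL z_above \<rho> r hole \<phi>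
      by (intro exI[of _ \<phi>] exI[of _ z] exI[of _ "min \<rho> (r / 4)"]) (auto simp: cball_above_def)
  qed
qed

lemma nested_cballs_above_avoiding_porous:
  fixes F :: "nat \<Rightarrow> ('a \<Rightarrow> real) set set"
  assumes por: "\<And>n. porous (Lp_space M p) (Lp_dist M p) lam (F n)" and lam: "0 < lam" "lam < 1"
    and \<phi>: "admissible_bound \<phi>" and c: "c \<in> Lp_fun M p" "AE x in M. \<phi> x \<le> \<bar>c x\<bar>"
  shows "\<exists>\<phi>s cs rs. \<phi>s 0 = \<phi> \<and> rs 0 = 1 \<and> (\<forall>n. admissible_bound (\<phi>s n) \<and> cs n \<in> Lp_fun M p
      \<and> (AE x in M. \<phi>s n x \<le> \<bar>cs n x\<bar>) \<and> 0 < rs n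
      \<and> (\<forall>x. \<phi>s n x \<le> \<phi>s (Suc n) x) \<and> rs (Suc n) \<le> rs n / 4
      \<and> Lp_norm M p (\<lambda>x. cs (Suc n) x - cs n x) + rs (Suc n) \<le> rs n
      \<and> Lp_class M p ` cball_above (\<phi>s (Suc n)) (cs (Suc n)) (rs (Suc n)) \<inter> F n = {})"
proof -
  define Inv where "Inv = (\<lambda>(\<phi>, c, r). admissible_bound \<phi> \<and> c \<in> Lp_fun M p
      \<and> (AE x in M. \<phi> x \<le> \<bar>c x\<bar>) \<and> 0 < (r::real))"
  define Shrink where "Shrink n = (\<lambda>(\<phi>, c, r) (\<phi>', c', r'). (\<forall>x. \<phi> x \<le> \<phi>' x) \<and> r' \<le> r / 4
      \<and> Lp_norm M p (\<lambda>x. c' x - c x) + r' \<le> r \<and> Lp_class M p ` cball_above \<phi>' c' r' \<inter> F n = {})"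
    for n
  have "\<exists>S. \<forall>n. (Inv (S n) \<and> (n = 0 \<longrightarrow> S n = (\<phi>, c, 1))) \<and> Shrink n (S n) (S (Suc n))"
  proof (rule dependent_nat_choice)
    show "\<exists>s. Inv s \<and> (0 = 0 \<longrightarrow> s = (\<phi>, c, 1))" using \<phi> c by (auto simp: Inv_def)
    show "\<exists>s'. (Inv s' \<and> (Suc n = 0 \<longrightarrow> s' = (\<phi>, c, 1))) \<and> Shrink n s s'"
      if "Inv s \<and> (n = 0 \<longrightarrow> s = (\<phi>, c, 1))" for s n
    proof -
      obtain \<phi>\<^sub>0 c\<^sub>0 r\<^sub>0 where s: "s = (\<phi>\<^sub>0, c\<^sub>0, r\<^sub>0)" by (cases s)
      with that have "admissible_bound \<phi>\<^sub>0" "c\<^sub>0 \<in> Lp_fun M p" "AE x in M. \<phi>\<^sub>0 x \<le> \<bar>c\<^sub>0 x\<bar>" "0 < r\<^sub>0"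
        by (auto simp: Inv_def)
      from porous_avoiding_cball_above[OF por lam this]
      obtain \<phi>' c' r' where "admissible_bound \<phi>'" "\<forall>x. \<phi>\<^sub>0 x \<le> \<phi>' x" "c' \<in> Lp_fun M p"
        "AE x in M. \<phi>' x \<le> \<bar>c' x\<bar>" "0 < r'" "r' \<le> r\<^sub>0 / 4"
        "Lp_norm M p (\<lambda>x. c' x - c\<^sub>0 x) + r' \<le> r\<^sub>0"
        "Lp_class M p ` cball_above \<phi>' c' r' \<inter> F n = {}"
        by blast
      then show ?thesis by (intro exI[of _ "(\<phi>', c', r')"]) (simp add: Inv_def Shrink_def s)
    qed
  qed
  then obtain S where S: "\<And>n. Inv (S n)" "S 0 = (\<phi>, c, 1)" "\<And>n. Shrink n (S n) (S (Suc n))"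
    by blast
  define \<phi>s where "\<phi>s n = fst (S n)" for n
  define cs where "cs n = fst (snd (S n))" for n
  define rs where "rs n = snd (snd (S n))" for n
  have "admissible_bound (\<phi>s n) \<and> cs n \<in> Lp_fun M p \<and> (AE x in M. \<phi>s n x \<le> \<bar>cs n x\<bar>) \<and> 0 < rs n"
    for n using S(1)[of n] by (cases "S n") (simp add: Inv_def \<phi>s_def cs_def rs_def)
  moreover have "(\<forall>x. \<phi>s n x \<le> \<phi>s (Suc n) x) \<and> rs (Suc n) \<le> rs n / 4
      \<and> Lp_norm M p (\<lambda>x. cs (Suc n) x - cs n x) + rs (Suc n) \<le> rs n
      \<and> Lp_class M p ` cball_above (\<phi>s (Suc n)) (cs (Suc n)) (rs (Suc n)) \<inter> F n = {}" for n
    using S(3)[of n] by (cases "S n", cases "S (Suc n)") (simp add: Shrink_def \<phi>s_def cs_def rs_def)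
  moreover have "\<phi>s 0 = \<phi>" "rs 0 = 1" using S(2) by (simp_all add: \<phi>s_def rs_def)
  ultimately show ?thesis by blast
qed

lemma Lp_above_not_covered_by_porous:
  fixes F :: "nat \<Rightarrow> ('a \<Rightarrow> real) set set"
  assumes por: "\<And>n. porous (Lp_space M p) (Lp_dist M p) lam (F n)" and lam: "0 < lam" "lam < 1"
    and \<phi>: "admissible_bound \<phi>" and c: "c \<in> Lp_fun M p" "AE x in M. \<phi> x \<le> \<bar>c x\<bar>"
  shows "\<exists>z\<in>Lp_fun M p. (AE x in M. \<phi> x \<le> \<bar>z x\<bar>) \<and> (\<forall>n. Lp_class M p z \<notin> F n)"
proof -
  obtain \<phi>s cs rs where \<phi>s0: "\<phi>s 0 = \<phi>" and rs0: "rs 0 = 1"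
    and seq: "\<And>n. admissible_bound (\<phi>s n) \<and> cs n \<in> Lp_fun M p
      \<and> (AE x in M. \<phi>s n x \<le> \<bar>cs n x\<bar>) \<and> 0 < rs n
      \<and> (\<forall>x. \<phi>s n x \<le> \<phi>s (Suc n) x) \<and> rs (Suc n) \<le> rs n / 4
      \<and> Lp_norm M p (\<lambda>x. cs (Suc n) x - cs n x) + rs (Suc n) \<le> rs n
      \<and> Lp_class M p ` cball_above (\<phi>s (Suc n)) (cs (Suc n)) (rs (Suc n)) \<inter> F n = {}"
    using nested_cballs_above_avoiding_porous[where F = F, OF por lam \<phi> c] by blast
  obtain z where zL: "z \<in> Lp_fun M p" and lim: "AE x in M. (\<lambda>n. cs n x) \<longlonglongrightarrow> z x"
    and z_near: "\<And>n. Lp_norm M p (\<lambda>x. z x - cs n x) \<le> rs n"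
    using Lp_limit_if_fast_Cauchy[of cs rs] seq rs0 by (auto simp: less_imp_le)
  have z_above: "AE x in M. \<phi>s n x \<le> \<bar>z x\<bar>" for n
    using seq by (intro AE_le_abs_if_LIMSEQ[OF _ _ lim]) auto
  have "Lp_class M p z \<notin> F n" for n
    using seq[of n] zL z_above[of "Suc n"] z_near[of "Suc n"] by (auto simp: cball_above_def)
  then show ?thesis using zL z_above[of 0] \<phi>s0 by auto
qed

end

theorem theorem2p3:
  fixes M :: "'a::t2_space measure" and p :: real and A :: "'a set" and g :: "'a \<Rightarrow> real"
  assumes "p \<ge> 1"
    and "locally_compact_space (euclidean :: 'a topology)"
    and "radon_measure M"
    and "A \<in> sets borel"
    and "\<forall>f\<in>Lp_fun M p. AE x in M. \<bar>f x\<bar> * indicator A x \<le> Lp_norm M p f"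
    and "g \<in> borel_measurable M"
    and "(\<lambda>x. g x * indicator A x) \<in> Lp_fun M p"
  shows "\<forall>lam. 0 < lam \<and> lam < 1 \<longrightarrow>
           \<not> sigma_porous (Lp_space M p) (Lp_dist M p) lam
               {Lp_class M p f | f. f \<in> Lp_fun M p \<and>
                   (AE x in M. \<bar>f x\<bar> \<ge> \<bar>g x\<bar> * indicator A x)}"
proof (intro allI impI notI)
  fix lam :: real
  assume lam: "0 < lam \<and> lam < 1"
    and "sigma_porous (Lp_space M p) (Lp_dist M p) lam
           {Lp_class M p f | f. f \<in> Lp_fun M p \<and> (AE x in M. \<bar>f x\<bar> \<ge> \<bar>g x\<bar> * indicator A x)}"
  then obtain F :: "nat \<Rightarrow> ('a \<Rightarrow> real) set set"
    where por: "\<And>n. porous (Lp_space M p) (Lp_dist M p) lam (F n)"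
    and cover: "{Lp_class M p f | f. f \<in> Lp_fun M p \<and> (AE x in M. \<bar>f x\<bar> \<ge> \<bar>g x\<bar> * indicator A x)}
                  = (\<Union>n. F n)"
    unfolding sigma_porous_def by blast
  interpret Lp_pointwise_bounded M p A
    using assms(1,5) by unfold_locales
  have gA: "(\<lambda>x. g x * indicator A x) \<in> Lp_fun M p" by (rule assms(7))
  have "(\<lambda>x. \<bar>g x * indicator A x\<bar>) \<in> Lp_fun M p"
    using Lp_fun_measurable[OF gA] by (intro Lp_fun_dominated[OF gA]) auto
  then have "admissible_bound (\<lambda>x. \<bar>g x * indicator A x\<bar>)"
    by (simp add: admissible_bound_def indicator_def)
  moreover have "AE x in M. \<bar>g x * indicator A x\<bar> \<le> \<bar>g x * indicator A x\<bar>" by simp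
  ultimately obtain z where z: "z \<in> Lp_fun M p" "AE x in M. \<bar>g x * indicator A x\<bar> \<le> \<bar>z x\<bar>"
    and "\<forall>n. Lp_class M p z \<notin> F n"
    using Lp_above_not_covered_by_porous[where F = F, OF por _ _ _ gA] lam by blast
  moreover have "AE x in M. \<bar>z x\<bar> \<ge> \<bar>g x\<bar> * indicator A x"
    using z(2) by (simp add: abs_mult)
  ultimately show False using cover z(1) by blast
qed

end
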